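(* Let $n\ge0$ and let \[\begin{array}{ccc} G&\to&H\\ \downarrow&&\downarrow\\ K&\to&L\end{array}\] be a commutative square of graphs such that (1) every morphism in the square is a monomorphism; (2) the square is a pullback in $\mathsf{Graph}$; and (3) every graph map $I_1^{\square n}\to L$ factors through $H\to L$ or through $K\to L$. Then this square is an $n$-skeletal pushout.
   Context: A graph is a set with a reflexive symmetric relation (edges); graph maps preserve the relation; $\mathsf{Graph}$ is their category. $I_1$ is the graph with two vertices joined by an edge, and $I_1^{\square n}$ is its $n$-fold box product, where the box product $G\square H$ has vertex set $V(G)\times V(H)$ and $(v,w)\sim(v',w')$ iff ($v=v'$, $w\sim w'$) or ($v\sim v'$, $w=w'$). The $1$-nerve $N_1G$ is the cubical set (presheaf on the box category with faces, degeneracies and connections) whose $k$-cubes are graph maps $I_1^{\square k}\to G$, with structure maps induced by the corresponding maps $I_1^{\square k}\to I_1^{\square j}$. $\operatorname{sk}^n$ of a cubical set is the subobject generated by cubes of dimension $\le n$. A commutative square of graphs is an $n$-skeletal pushout if applying $\operatorname{sk}^n\circ N_1$ yields a pushout square of cubical sets. *)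

theory Defs
  imports Main "HOL-Library.FuncSet"
begin

type_synonym 'a graph = "'a set \<times> ('a \<Rightarrow> 'a \<Rightarrow> bool)"

definition gverts :: "'a graph \<Rightarrow> 'a set" where "gverts G = fst G"
definition gedge :: "'a graph \<Rightarrow> 'a \<Rightarrow> 'a \<Rightarrow> bool" where "gedge G = snd G"

definition is_graph :: "'a graph \<Rightarrow> bool" where
  "is_graph G \<longleftrightarrow>
     (\<forall>x\<in>gverts G. gedge G x x) \<and>
     (\<forall>x y. gedge G x y \<longrightarrow> gedge G y x) \<and>
     (\<forall>x y. gedge G x y \<longrightarrow> x \<in> gverts G \<and> y \<in> gverts G)"

definition graph_map :: "'a graph \<Rightarrow> 'b graph \<Rightarrow> ('a \<Rightarrow> 'b) \<Rightarrow> bool" where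
  "graph_map G H f \<longleftrightarrow>
     (\<forall>x\<in>gverts G. f x \<in> gverts H) \<and>
     (\<forall>x\<in>gverts G. \<forall>y\<in>gverts G. gedge G x y \<longrightarrow> gedge H (f x) (f y))"

definition graph_mono :: "'a graph \<Rightarrow> 'b graph \<Rightarrow> ('a \<Rightarrow> 'b) \<Rightarrow> bool" where
  "graph_mono G H f \<longleftrightarrow> graph_map G H f \<and> inj_on f (gverts G)"

definition box_prod :: "'a graph \<Rightarrow> 'b graph \<Rightarrow> ('a \<times> 'b) graph" where
  "box_prod G H = (gverts G \<times> gverts H,
     \<lambda>(v, w) (v', w'). (v = v' \<and> v \<in> gverts G \<and> gedge H w w') \<or>
                       (gedge G v v' \<and> w = w' \<and> w \<in> gverts H))"

definition I1 :: "bool graph" where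
  "I1 = (UNIV, \<lambda>x y. True)"

text \<open>The n-fold box product of I_1, realised on bool lists of length n:
  I_1^(box 0) is the one-vertex graph (unit of the box product) and
  I_1^(box (k+1)) = I_1 box I_1^(box k), transported along (b, xs) to b # xs.\<close>
fun cube :: "nat \<Rightarrow> bool list graph" where
  "cube 0 = ({[]}, \<lambda>x y. x = [] \<and> y = [])"
| "cube (Suc k) =
     (let P = box_prod I1 (cube k) in
       ((\<lambda>(b, xs). b # xs) ` gverts P,
        \<lambda>u v. u \<noteq> [] \<and> v \<noteq> [] \<and> gedge P (hd u, tl u) (hd v, tl v)))"

abbreviation cv :: "nat \<Rightarrow> bool list set" where "cv k \<equiv> gverts (cube k)"

definition face :: "nat \<Rightarrow> bool \<Rightarrow> bool list \<Rightarrow> bool list" where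
  "face i e xs = take i xs @ [e] @ drop i xs"            \<comment> \<open>[1]^k \<rightarrow> [1]^(k+1), i \<le> k\<close>

definition degen :: "nat \<Rightarrow> bool list \<Rightarrow> bool list" where
  "degen i xs = take i xs @ drop (Suc i) xs"             \<comment> \<open>[1]^(k+1) \<rightarrow> [1]^k, i \<le> k\<close>

definition conn :: "nat \<Rightarrow> bool \<Rightarrow> bool list \<Rightarrow> bool list" where
  "conn i e xs = take i xs @
     [if e then (xs ! i \<or> xs ! Suc i) else (xs ! i \<and> xs ! Suc i)] @ drop (i + 2) xs"
                                                        \<comment> \<open>[1]^(k+2) \<rightarrow> [1]^(k+1), i \<le> k\<close>

inductive box_mor0 :: "nat \<Rightarrow> nat \<Rightarrow> (bool list \<Rightarrow> bool list) \<Rightarrow> bool" where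
  idm: "box_mor0 k k (\<lambda>x. x)"
| facem: "box_mor0 k m f \<Longrightarrow> i \<le> m \<Longrightarrow> box_mor0 k (Suc m) (face i e \<circ> f)"
| degenm: "box_mor0 k (Suc m) f \<Longrightarrow> i \<le> m \<Longrightarrow> box_mor0 k m (degen i \<circ> f)"
| connm: "box_mor0 k (Suc (Suc m)) f \<Longrightarrow> i \<le> m \<Longrightarrow> box_mor0 k (Suc m) (conn i e \<circ> f)"

text \<open>Morphisms [1]^k \<rightarrow> [1]^m of the box category, as (extensional) maps of
  vertex sets of cubes.\<close>
definition boxhom :: "nat \<Rightarrow> nat \<Rightarrow> (bool list \<Rightarrow> bool list) set" where
  "boxhom k m = {restrict f (cv k) | f. box_mor0 k m f}"

text \<open>A cubical set on carrier type 'x: sets of k-cubes for each k and an action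
  act k m f : X_m \<rightarrow> X_k for every box morphism f : [1]^k \<rightarrow> [1]^m.\<close>
type_synonym 'x cset = "(nat \<Rightarrow> 'x set) \<times> (nat \<Rightarrow> nat \<Rightarrow> (bool list \<Rightarrow> bool list) \<Rightarrow> 'x \<Rightarrow> 'x)"

definition cells :: "'x cset \<Rightarrow> nat \<Rightarrow> 'x set" where "cells X = fst X"
definition act :: "'x cset \<Rightarrow> nat \<Rightarrow> nat \<Rightarrow> (bool list \<Rightarrow> bool list) \<Rightarrow> 'x \<Rightarrow> 'x" where
  "act X = snd X"

definition cubical_set :: "'x cset \<Rightarrow> bool" where
  "cubical_set X \<longleftrightarrow>
     (\<forall>k m f x. f \<in> boxhom k m \<longrightarrow> x \<in> cells X m \<longrightarrow> act X k m f x \<in> cells X k) \<and>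
     (\<forall>k. \<forall>x\<in>cells X k. act X k k (restrict (\<lambda>y. y) (cv k)) x = x) \<and>
     (\<forall>k m p f g x. f \<in> boxhom k m \<longrightarrow> g \<in> boxhom m p \<longrightarrow> x \<in> cells X p \<longrightarrow>
        act X k p (restrict (g \<circ> f) (cv k)) x = act X k m f (act X m p g x))"

definition cset_mor :: "'x cset \<Rightarrow> 'y cset \<Rightarrow> (nat \<Rightarrow> 'x \<Rightarrow> 'y) \<Rightarrow> bool" where
  "cset_mor X Y \<alpha> \<longleftrightarrow>
     (\<forall>k. \<forall>x\<in>cells X k. \<alpha> k x \<in> cells Y k) \<and>
     (\<forall>k m f x. f \<in> boxhom k m \<longrightarrow> x \<in> cells X m \<longrightarrow>
        \<alpha> k (act X k m f x) = act Y k m f (\<alpha> m x))"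

definition sub_cset :: "'x cset \<Rightarrow> (nat \<Rightarrow> 'x set) \<Rightarrow> bool" where
  "sub_cset X S \<longleftrightarrow>
     (\<forall>k. S k \<subseteq> cells X k) \<and>
     (\<forall>k m f x. f \<in> boxhom k m \<longrightarrow> x \<in> S m \<longrightarrow> act X k m f x \<in> S k)"

definition sk :: "nat \<Rightarrow> 'x cset \<Rightarrow> 'x cset" where
  "sk n X = (\<lambda>k. \<Inter> {S k | S. sub_cset X S \<and> (\<forall>m\<le>n. cells X m \<subseteq> S m)}, act X)"

definition nerve1 :: "'a graph \<Rightarrow> (bool list \<Rightarrow> 'a) cset" where
  "nerve1 G = (\<lambda>k. {c. c \<in> extensional (cv k) \<and> graph_map (cube k) G c},
               \<lambda>k m f c. restrict (c \<circ> f) (cv k))"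

definition nerve1_map :: "('a \<Rightarrow> 'b) \<Rightarrow> nat \<Rightarrow> (bool list \<Rightarrow> 'a) \<Rightarrow> (bool list \<Rightarrow> 'b)" where
  "nerve1_map \<phi> k c = restrict (\<phi> \<circ> c) (cv k)"

text \<open>A commutative square A \<rightarrow> B, A \<rightarrow> C, B \<rightarrow> D, C \<rightarrow> D of cubical sets is a
  pushout: universal property against every cubical set X on carrier type 'x.\<close>
definition cset_pushout ::
  "'a cset \<Rightarrow> 'b cset \<Rightarrow> 'c cset \<Rightarrow> 'd cset \<Rightarrow>
   (nat \<Rightarrow> 'a \<Rightarrow> 'b) \<Rightarrow> (nat \<Rightarrow> 'a \<Rightarrow> 'c) \<Rightarrow> (nat \<Rightarrow> 'b \<Rightarrow> 'd) \<Rightarrow> (nat \<Rightarrow> 'c \<Rightarrow> 'd) \<Rightarrow>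
   'x itself \<Rightarrow> bool" where
  "cset_pushout A B C D f g h k (_ :: 'x itself) \<longleftrightarrow>
     cset_mor A B f \<and> cset_mor A C g \<and> cset_mor B D h \<and> cset_mor C D k \<and>
     (\<forall>j. \<forall>a\<in>cells A j. h j (f j a) = k j (g j a)) \<and>
     (\<forall>(X :: 'x cset) u v.
        cubical_set X \<longrightarrow> cset_mor B X u \<longrightarrow> cset_mor C X v \<longrightarrow>
        (\<forall>j. \<forall>a\<in>cells A j. u j (f j a) = v j (g j a)) \<longrightarrow>
        (\<exists>w. cset_mor D X w \<and>
              (\<forall>j. \<forall>b\<in>cells B j. w j (h j b) = u j b) \<and>
              (\<forall>j. \<forall>c\<in>cells C j. w j (k j c) = v j c) \<and>
              (\<forall>w'. cset_mor D X w' \<longrightarrow>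
                    (\<forall>j. \<forall>b\<in>cells B j. w' j (h j b) = u j b) \<longrightarrow>
                    (\<forall>j. \<forall>c\<in>cells C j. w' j (k j c) = v j c) \<longrightarrow>
                    (\<forall>j. \<forall>d\<in>cells D j. w' j d = w j d))))"

definition skeletal_pushout ::
  "nat \<Rightarrow> 'g graph \<Rightarrow> 'h graph \<Rightarrow> 'k graph \<Rightarrow> 'l graph \<Rightarrow>
   ('g \<Rightarrow> 'h) \<Rightarrow> ('g \<Rightarrow> 'k) \<Rightarrow> ('h \<Rightarrow> 'l) \<Rightarrow> ('k \<Rightarrow> 'l) \<Rightarrow> 'x itself \<Rightarrow> bool" where
  "skeletal_pushout n G H K L gh gk hl kl T \<longleftrightarrow>
     cset_pushout (sk n (nerve1 G)) (sk n (nerve1 H)) (sk n (nerve1 K)) (sk n (nerve1 L))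
       (nerve1_map gh) (nerve1_map gk) (nerve1_map hl) (nerve1_map kl) T"

definition graph_pullback_obj ::
  "'h graph \<Rightarrow> 'k graph \<Rightarrow> ('h \<Rightarrow> 'l) \<Rightarrow> ('k \<Rightarrow> 'l) \<Rightarrow> ('h \<times> 'k) graph" where
  "graph_pullback_obj H K hl kl =
     ({(a, b). a \<in> gverts H \<and> b \<in> gverts K \<and> hl a = kl b},
      \<lambda>(a, b) (a', b'). a \<in> gverts H \<and> b \<in> gverts K \<and> hl a = kl b \<and>
                        a' \<in> gverts H \<and> b' \<in> gverts K \<and> hl a' = kl b' \<and>
                        gedge H a a' \<and> gedge K b b')"

definition graph_is_pullback ::
  "'g graph \<Rightarrow> 'h graph \<Rightarrow> 'k graph \<Rightarrow> 'l graph \<Rightarrow>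
   ('g \<Rightarrow> 'h) \<Rightarrow> ('g \<Rightarrow> 'k) \<Rightarrow> ('h \<Rightarrow> 'l) \<Rightarrow> ('k \<Rightarrow> 'l) \<Rightarrow> bool" where
  "graph_is_pullback G H K L gh gk hl kl \<longleftrightarrow>
     (let P = graph_pullback_obj H K hl kl; c = (\<lambda>x. (gh x, gk x)) in
       bij_betw c (gverts G) (gverts P) \<and>
       (\<forall>x\<in>gverts G. \<forall>y\<in>gverts G. gedge G x y \<longleftrightarrow> gedge P (c x) (c y)))"

end

theory Submission
  imports Defs
begin

text \<open>The \<open>n\<close>-skeleton of a cubical set consists of the images of its cubes of dimension at most
  \<open>n\<close> under box morphisms. Every such cube of \<open>N\<^sub>1 L\<close> comes from \<open>sk\<^sup>n N\<^sub>1 H\<close> or from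
  \<open>sk\<^sup>n N\<^sub>1 K\<close>: pulled back along a degeneracy it becomes an \<open>n\<close>-cube, which factors through
  \<open>H\<close> or \<open>K\<close> by the covering hypothesis, and a face recovers it. Since \<open>N\<^sub>1\<close> preserves
  monomorphisms and pullbacks, the square of nerves is a pullback of monomorphisms, and it stays
  one after passing to \<open>n\<close>-skeleta because monomorphisms reflect skeleta: every box morphism
  factors as a split epimorphism followed by a face inclusion, and an injective map sees whether a
  cube factors through that epimorphism. Finally, a pullback square of monomorphisms of presheaves
  whose legs jointly cover the corner is a pushout.\<close>

section \<open>Cubes as graphs of bit vectors\<close>

definition hamming_adjacent :: "bool list \<Rightarrow> bool list \<Rightarrow> bool" where
  "hamming_adjacent u v \<longleftrightarrow> length u = length v \<and> (\<exists>i. \<forall>j<length u. j \<noteq> i \<longrightarrow> u ! j = v ! j)"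

lemma hamming_adjacent_Cons:
  "hamming_adjacent (x # u) (y # v) \<longleftrightarrow> (x = y \<and> hamming_adjacent u v) \<or> u = v"
proof
  assume "hamming_adjacent (x # u) (y # v)"
  then obtain i where len: "length u = length v"
    and i: "\<forall>j<Suc (length u). j \<noteq> i \<longrightarrow> (x # u) ! j = (y # v) ! j"
    by (auto simp: hamming_adjacent_def)
  show "(x = y \<and> hamming_adjacent u v) \<or> u = v"
  proof (cases i)
    case 0
    then have "\<forall>j<length u. u ! j = v ! j" using i by force
    then show ?thesis using len by (simp add: nth_equalityI)
  next
    case (Suc i')
    then have "x = y" "\<forall>j<length u. j \<noteq> i' \<longrightarrow> u ! j = v ! j" using i by force+
    then show ?thesis using len by (auto simp: hamming_adjacent_def)
  qed
next
  assume "(x = y \<and> hamming_adjacent u v) \<or> u = v"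
  then show "hamming_adjacent (x # u) (y # v)"
  proof
    assume "x = y \<and> hamming_adjacent u v"
    then obtain i where "x = y" "length u = length v" "\<forall>j<length u. j \<noteq> i \<longrightarrow> u ! j = v ! j"
      by (auto simp: hamming_adjacent_def)
    then show ?thesis
      unfolding hamming_adjacent_def
        by (intro conjI exI[of _ "Suc i"]) (auto simp: nth_Cons split: nat.split)
  next
    assume "u = v"
    then show ?thesis
      unfolding hamming_adjacent_def
        by (intro conjI exI[of _ 0]) (auto simp: nth_Cons split: nat.split)
  qed
qed

lemma cube_verts_and_edges:
  "cv k = {xs. length xs = k} \<and> (\<forall>u v. gedge (cube k) u v \<longleftrightarrow> length u = k \<and> hamming_adjacent u v)"
proof (induction k)
  case 0
  then show ?case by (auto simp: gverts_def gedge_def hamming_adjacent_def)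
next
  case (Suc k)
  have verts: "cv (Suc k) = {xs. length xs = Suc k}"
    using Suc by (auto simp: gverts_def box_prod_def I1_def Let_def image_iff length_Suc_conv)
  have edge_Cons: "gedge (cube (Suc k)) (x # u) (y # v) \<longleftrightarrow>
      (x = y \<and> gedge (cube k) u v) \<or> (u = v \<and> u \<in> cv k)" for x y u v
    by (auto simp: gedge_def box_prod_def Let_def I1_def gverts_def)
  have edge_Nil: "\<not> gedge (cube (Suc k)) [] v" "\<not> gedge (cube (Suc k)) u []" for u v
    by (simp_all add: gedge_def Let_def)
  have "gedge (cube (Suc k)) u v \<longleftrightarrow> length u = Suc k \<and> hamming_adjacent u v" for u v
    using Suc edge_Cons edge_Nil hamming_adjacent_Cons
    by (cases u; cases v) (auto simp: hamming_adjacent_def)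
  with verts show ?case by blast
qed

lemma cv_cube: "cv k = {xs. length xs = k}"
  using cube_verts_and_edges by blast

lemma gedge_cube: "gedge (cube k) u v \<longleftrightarrow> length u = k \<and> hamming_adjacent u v"
  using cube_verts_and_edges by blast

declare cube.simps [simp del]

lemma face_append: "length ys = i \<Longrightarrow> face i e (ys @ zs) = ys @ e # zs"
  by (simp add: face_def)

lemma degen_append: "length ys = i \<Longrightarrow> degen i (ys @ a # zs) = ys @ zs"
  by (simp add: degen_def)

lemma conn_append:
  "length ys = i \<Longrightarrow> conn i e (ys @ a # b # zs) = ys @ (if e then a \<or> b else a \<and> b) # zs"
  by (simp add: conn_def nth_append)

lemma length_face: "i \<le> length xs \<Longrightarrow> length (face i e xs) = Suc (length xs)"
  by (simp add: face_def)

lemma length_degen: "i < length xs \<Longrightarrow> length (degen i xs) = length xs - 1"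
  by (simp add: degen_def)

lemma length_conn: "Suc i < length xs \<Longrightarrow> length (conn i e xs) = length xs - 1"
  by (simp add: conn_def)

lemma nth_face: "i \<le> length xs \<Longrightarrow> j < Suc (length xs) \<Longrightarrow>
    face i e xs ! j = (if j < i then xs ! j else if j = i then e else xs ! (j - 1))"
  by (auto simp: face_def nth_append min_def)

lemma nth_degen: "i < length xs \<Longrightarrow> j < length xs - 1 \<Longrightarrow>
    degen i xs ! j = (if j < i then xs ! j else xs ! Suc j)"
  by (auto simp: degen_def nth_append min_def)

lemma nth_conn: "Suc i < length xs \<Longrightarrow> j < length xs - 1 \<Longrightarrow>
    conn i e xs ! j = (if j < i then xs ! j
      else if j = i then (if e then xs ! i \<or> xs ! Suc i else xs ! i \<and> xs ! Suc i)
      else xs ! Suc j)"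
  by (auto simp: conn_def nth_append min_def)

lemma graph_map_face: "i \<le> k \<Longrightarrow> graph_map (cube k) (cube (Suc k)) (face i e)"
  unfolding graph_map_def cv_cube
proof (intro conjI ballI impI)
  fix u v :: "bool list"
  assume i: "i \<le> k" and "u \<in> {xs. length xs = k}" "v \<in> {xs. length xs = k}" "gedge (cube k) u v"
  then obtain i0 where i0: "\<forall>j<k. j \<noteq> i0 \<longrightarrow> u ! j = v ! j" "length u = k" "length v = k"
    by (auto simp: gedge_cube hamming_adjacent_def)
  let ?i1 = "if i0 < i then i0 else Suc i0"
  have "\<forall>j<Suc k. j \<noteq> ?i1 \<longrightarrow> face i e u ! j = face i e v ! j"
    using i0 i by (auto simp: nth_face)
  then show "gedge (cube (Suc k)) (face i e u) (face i e v)"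
    using i0 i unfolding gedge_cube hamming_adjacent_def
    by (intro conjI exI[of _ ?i1]) (simp_all add: length_face)
qed (simp add: length_face)

lemma graph_map_degen: "i \<le> k \<Longrightarrow> graph_map (cube (Suc k)) (cube k) (degen i)"
  unfolding graph_map_def cv_cube
proof (intro conjI ballI impI)
  fix u v :: "bool list"
  assume i: "i \<le> k" and "u \<in> {xs. length xs = Suc k}" "v \<in> {xs. length xs = Suc k}"
    "gedge (cube (Suc k)) u v"
  then obtain i0 where i0: "\<forall>j<Suc k. j \<noteq> i0 \<longrightarrow> u ! j = v ! j" "length u = Suc k" "length v = Suc k"
    by (auto simp: gedge_cube hamming_adjacent_def)
  let ?i1 = "if i0 \<le> i then i0 else i0 - 1"
  have "\<forall>j<k. j \<noteq> ?i1 \<longrightarrow> degen i u ! j = degen i v ! j"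
    using i0 i by (auto simp: nth_degen)
  then show "gedge (cube k) (degen i u) (degen i v)"
    using i0 i unfolding gedge_cube hamming_adjacent_def
    by (intro conjI exI[of _ ?i1]) (simp_all add: length_degen)
qed (simp add: length_degen)

lemma graph_map_conn: "i \<le> k \<Longrightarrow> graph_map (cube (Suc (Suc k))) (cube (Suc k)) (conn i e)"
  unfolding graph_map_def cv_cube
proof (intro conjI ballI impI)
  fix u v :: "bool list"
  assume i: "i \<le> k" and "u \<in> {xs. length xs = Suc (Suc k)}" "v \<in> {xs. length xs = Suc (Suc k)}"
    "gedge (cube (Suc (Suc k))) u v"
  then obtain i0 where i0: "\<forall>j<Suc (Suc k). j \<noteq> i0 \<longrightarrow> u ! j = v ! j"
      "length u = Suc (Suc k)" "length v = Suc (Suc k)"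
    by (auto simp: gedge_cube hamming_adjacent_def)
  let ?i1 = "if i0 < i then i0 else if i0 \<le> Suc i then i else i0 - 1"
  have "\<forall>j<Suc k. j \<noteq> ?i1 \<longrightarrow> conn i e u ! j = conn i e v ! j"
    using i0 i by (auto simp: nth_conn)
  then show "gedge (cube (Suc k)) (conn i e u) (conn i e v)"
    using i0 i unfolding gedge_cube hamming_adjacent_def
    by (intro conjI exI[of _ ?i1]) (simp_all add: length_conn)
qed (simp add: length_conn)

lemma graph_map_comp: "graph_map A B f \<Longrightarrow> graph_map B C g \<Longrightarrow> graph_map A C (g \<circ> f)"
  by (simp add: graph_map_def)

lemma graph_map_id: "graph_map A A (\<lambda>x. x)"
  by (simp add: graph_map_def)

lemma graph_map_restrict: "graph_map A B f \<Longrightarrow> graph_map A B (restrict f (gverts A))"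
  by (simp add: graph_map_def)

lemma box_mor0_graph_map: "box_mor0 k m f \<Longrightarrow> graph_map (cube k) (cube m) f"
proof (induction rule: box_mor0.induct)
  case (idm k)
  then show ?case by (rule graph_map_id)
next
  case (facem k m f i e)
  then show ?case using graph_map_comp graph_map_face by blast
next
  case (degenm k m f i)
  then show ?case using graph_map_comp graph_map_degen by blast
next
  case (connm k m f i e)
  then show ?case using graph_map_comp graph_map_conn by blast
qed

lemma box_mor0_in_cv: "box_mor0 k m f \<Longrightarrow> t \<in> cv k \<Longrightarrow> f t \<in> cv m"
  by (drule box_mor0_graph_map) (simp add: graph_map_def)

lemma box_mor0_comp: "box_mor0 p q g \<Longrightarrow> box_mor0 j p f \<Longrightarrow> box_mor0 j q (g \<circ> f)"
proof (induction rule: box_mor0.induct)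
  case (facem k m g i e)
  then have "box_mor0 j (Suc m) (face i e \<circ> (g \<circ> f))"
    by (intro box_mor0.facem) (simp_all add: comp_def)
  then show ?case by (simp add: comp_def)
next
  case (degenm k m g i)
  then have "box_mor0 j m (degen i \<circ> (g \<circ> f))" by (intro box_mor0.degenm) (simp_all add: comp_def)
  then show ?case by (simp add: comp_def)
next
  case (connm k m g i e)
  then have "box_mor0 j (Suc m) (conn i e \<circ> (g \<circ> f))"
    by (intro box_mor0.connm) (simp_all add: comp_def)
  then show ?case by (simp add: comp_def)
qed (simp add: o_def)

lemma box_mor0_degen: "i \<le> k \<Longrightarrow> box_mor0 (Suc k) k (degen i)"
  using box_mor0.degenm[OF box_mor0.idm, of i k] by (simp add: o_def)

lemma box_mor0_conn: "i \<le> k \<Longrightarrow> box_mor0 (Suc (Suc k)) (Suc k) (conn i e)"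
  using box_mor0.connm[OF box_mor0.idm, of i k e] by (simp add: o_def)

lemma box_mor0_drop: "t \<le> n \<Longrightarrow> box_mor0 n (n - t) (drop t)"
proof (induction t)
  case 0
  then show ?case using box_mor0.idm[of n] by (simp add: fun_eq_iff)
next
  case (Suc t)
  then have "box_mor0 n (Suc (n - Suc t)) (drop t)" by (simp add: Suc_diff_Suc)
  then have "box_mor0 n (n - Suc t) (degen 0 \<circ> drop t)" by (rule box_mor0.degenm) simp
  moreover have "degen 0 \<circ> drop t = drop (Suc t)" by (simp add: fun_eq_iff degen_def)
  ultimately show ?case by simp
qed

lemma box_mor0_prepend_False: "box_mor0 m (m + t) (\<lambda>z. replicate t False @ z)"
proof (induction t)
  case 0
  then show ?case using box_mor0.idm[of m] by simp
next
  case (Suc t)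
  then have "box_mor0 m (Suc (m + t)) (face 0 False \<circ> (\<lambda>z. replicate t False @ z))"
    by (rule box_mor0.facem) simp
  moreover have "face 0 False \<circ> (\<lambda>z. replicate t False @ z) = (\<lambda>z. replicate (Suc t) False @ z)"
    by (simp add: fun_eq_iff face_def)
  ultimately show ?case by simp
qed

section \<open>Factorisation of box morphisms through a split quotient\<close>

text \<open>A pattern \<open>P\<close> of length \<open>m\<close> describes the face of \<open>[1]^m\<close> obtained by fixing the
  coordinates \<open>Some b\<close>; \<open>fill P\<close> embeds \<open>[1]^(free_dims P)\<close> onto that face.\<close>

fun fill :: "bool option list \<Rightarrow> bool list \<Rightarrow> bool list" where
  "fill [] zs = []"
| "fill (Some b # P) zs = b # fill P zs"
| "fill (None # P) zs = hd zs # fill P (tl zs)"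

fun free_dims :: "bool option list \<Rightarrow> nat" where
  "free_dims [] = 0"
| "free_dims (Some b # P) = free_dims P"
| "free_dims (None # P) = Suc (free_dims P)"

lemma free_dims_append [simp]: "free_dims (P @ Q) = free_dims P + free_dims Q"
  by (induction P rule: free_dims.induct) auto

lemma free_dims_le_length: "free_dims P \<le> length P"
  by (induction P rule: free_dims.induct) auto

lemma free_dims_replicate_None [simp]: "free_dims (replicate j None) = j"
  by (induction j) auto

lemma length_fill [simp]: "length (fill P zs) = length P"
  by (induction P zs rule: fill.induct) auto

lemma fill_append [simp]:
  "length zs = free_dims P \<Longrightarrow> fill (P @ Q) (zs @ zs') = fill P zs @ fill Q zs'"
proof (induction P arbitrary: zs)
  case (Cons x P)
  then show ?case by (cases x) (auto simp: length_Suc_conv)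
qed simp

lemma fill_replicate_None: "length zs = j \<Longrightarrow> fill (replicate j None) zs = zs"
  by (induction j arbitrary: zs) (auto simp: length_Suc_conv)

lemma ball_cv_free_dims_append:
  assumes "\<And>zs zs'. length zs = free_dims P \<Longrightarrow> length zs' = free_dims Q \<Longrightarrow> \<Phi> (zs @ zs')"
  shows "\<forall>z\<in>cv (free_dims (P @ Q)). \<Phi> z"
proof
  fix z assume "z \<in> cv (free_dims (P @ Q))"
  then have "length (take (free_dims P) z) = free_dims P"
    and "length (drop (free_dims P) z) = free_dims Q"
    by (simp_all add: cv_cube)
  then show "\<Phi> z" using assms by (metis append_take_drop_id)
qed

lemma split_list_Cons: "i < length xs \<Longrightarrow> \<exists>ys x zs. xs = ys @ x # zs \<and> length ys = i"
  by (metis id_take_nth_drop length_take min.absorb4)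

definition split_factorization ::
  "nat \<Rightarrow> (bool list \<Rightarrow> bool list) \<Rightarrow> bool option list \<Rightarrow>
   (bool list \<Rightarrow> bool list) \<Rightarrow> (bool list \<Rightarrow> bool list) \<Rightarrow> bool" where
  "split_factorization j f P E \<sigma> \<longleftrightarrow>
     box_mor0 j (free_dims P) E \<and> graph_map (cube (free_dims P)) (cube j) \<sigma> \<and>
     (\<forall>z\<in>cv (free_dims P). E (\<sigma> z) = z) \<and> (\<forall>t\<in>cv j. f t = fill P (E t))"

lemma split_factorization_comp:
  assumes fac: "split_factorization j f P E \<sigma>"
    and D: "box_mor0 (free_dims P) (free_dims P') D"
    and \<tau>: "graph_map (cube (free_dims P')) (cube (free_dims P)) \<tau>"
      "\<forall>z\<in>cv (free_dims P'). D (\<tau> z) = z"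
    and g: "\<forall>z\<in>cv (free_dims P). g (fill P z) = fill P' (D z)"
  shows "split_factorization j (g \<circ> f) P' (D \<circ> E) (\<sigma> \<circ> \<tau>)"
  unfolding split_factorization_def
proof (intro conjI ballI)
  have E: "box_mor0 j (free_dims P) E" and \<sigma>: "graph_map (cube (free_dims P)) (cube j) \<sigma>"
    and E\<sigma>: "\<forall>z\<in>cv (free_dims P). E (\<sigma> z) = z" and f: "\<forall>t\<in>cv j. f t = fill P (E t)"
    using fac by (auto simp: split_factorization_def)
  show "box_mor0 j (free_dims P') (D \<circ> E)" using box_mor0_comp D E by blast
  show "graph_map (cube (free_dims P')) (cube j) (\<sigma> \<circ> \<tau>)" using graph_map_comp \<tau>(1) \<sigma> by blast
  fix z assume z: "z \<in> cv (free_dims P')"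
  then have "\<tau> z \<in> cv (free_dims P)" using \<tau>(1) by (auto simp: graph_map_def)
  then show "(D \<circ> E) ((\<sigma> \<circ> \<tau>) z) = z" using E\<sigma> \<tau>(2) z by auto
next
  fix t assume t: "t \<in> cv j"
  then have "E t \<in> cv (free_dims P)" using box_mor0_in_cv fac
    by (auto simp: split_factorization_def)
  then show "(g \<circ> f) t = fill P' ((D \<circ> E) t)" using fac g t by (auto simp: split_factorization_def)
qed

lemma split_factorization_same_dims:
  assumes "split_factorization j f P E \<sigma>"
    and "\<forall>z\<in>cv (free_dims P). g (fill P z) = fill P' z" and "free_dims P' = free_dims P"
  shows "split_factorization j (g \<circ> f) P' E \<sigma>"
  using split_factorization_comp[OF assms(1), of P' "\<lambda>x. x" "\<lambda>x. x" g] assms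
  by (auto intro: box_mor0.idm graph_map_id simp: o_def)

lemma split_factorization_degen:
  assumes fac: "split_factorization j f P E \<sigma>"
    and g: "\<forall>z\<in>cv (free_dims P). g (fill P z) = fill P' (degen k z)"
    and dims: "free_dims P = Suc (free_dims P')" "k \<le> free_dims P'"
  shows "split_factorization j (g \<circ> f) P' (degen k \<circ> E) (\<sigma> \<circ> face k False)"
proof (rule split_factorization_comp[OF fac _ _ _ g])
  show "box_mor0 (free_dims P) (free_dims P') (degen k)" using box_mor0_degen dims by simp
  show "graph_map (cube (free_dims P')) (cube (free_dims P)) (face k False)"
    using graph_map_face dims by simp
  show "\<forall>z\<in>cv (free_dims P'). degen k (face k False z) = z"
    using dims by (auto simp: cv_cube face_def degen_def)
qed

text \<open>\<open>\<not> e\<close> is neutral for \<open>conn k e\<close>, so inserting it after coordinate \<open>k\<close> gives a section.\<close>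

lemma split_factorization_conn:
  assumes fac: "split_factorization j f P E \<sigma>"
    and g: "\<forall>z\<in>cv (free_dims P). g (fill P z) = fill P' (conn k e z)"
    and dims: "free_dims P = Suc (Suc q)" "free_dims P' = Suc q" "k \<le> q"
  shows "split_factorization j (g \<circ> f) P' (conn k e \<circ> E) (\<sigma> \<circ> face (Suc k) (\<not> e))"
proof (rule split_factorization_comp[OF fac _ _ _ g])
  show "box_mor0 (free_dims P) (free_dims P') (conn k e)" using box_mor0_conn dims by simp
  show "graph_map (cube (free_dims P')) (cube (free_dims P)) (face (Suc k) (\<not> e))"
    using graph_map_face dims by simp
  show "\<forall>z\<in>cv (free_dims P'). conn k e (face (Suc k) (\<not> e) z) = z"
  proof
    fix z assume "z \<in> cv (free_dims P')"
    then obtain ys x zs where "z = ys @ x # zs" "length ys = k"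
      using split_list_Cons[of k z] dims by (auto simp: cv_cube)
    then show "conn k e (face (Suc k) (\<not> e) z) = z"
      using face_append[of "ys @ [x]" "Suc k" "\<not> e" zs] by (simp add: conn_append)
  qed
qed

definition has_split_factorization :: "nat \<Rightarrow> nat \<Rightarrow> (bool list \<Rightarrow> bool list) \<Rightarrow> bool" where
  "has_split_factorization j m f \<longleftrightarrow> (\<exists>P E \<sigma>. length P = m \<and> split_factorization j f P E \<sigma>)"

lemma has_split_factorizationI:
  "split_factorization j f P E \<sigma> \<Longrightarrow> length P = m \<Longrightarrow> has_split_factorization j m f"
  unfolding has_split_factorization_def by blast

lemma has_split_factorization_face:
  assumes fac: "split_factorization j f P E \<sigma>" and i: "i \<le> length P"
  shows "has_split_factorization j (Suc (length P)) (face i e \<circ> f)"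
proof -
  obtain P1 P2 where P: "P = P1 @ P2" "length P1 = i"
    using i by (metis append_take_drop_id length_take min.absorb2)
  have "split_factorization j (face i e \<circ> f) (P1 @ Some e # P2) E \<sigma>"
    using fac unfolding P(1)
    by (rule split_factorization_same_dims)
      (intro ball_cv_free_dims_append, auto simp: P(2) face_append)
  then show ?thesis by (rule has_split_factorizationI) (simp add: P)
qed

lemma has_split_factorization_degen:
  assumes fac: "split_factorization j f P E \<sigma>" and i: "i < length P"
  shows "has_split_factorization j (length P - 1) (degen i \<circ> f)"
proof -
  obtain P1 x P2 where P: "P = P1 @ x # P2" "length P1 = i"
    using split_list_Cons[OF i] by blast
  show ?thesis
  proof (cases x)
    case None
    have "split_factorization j (degen i \<circ> f) (P1 @ P2)
        (degen (free_dims P1) \<circ> E) (\<sigma> \<circ> face (free_dims P1) False)"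
      using fac unfolding P(1) None
      by (rule split_factorization_degen)
        (intro ball_cv_free_dims_append, auto simp: P(2) length_Suc_conv degen_append)
    then show ?thesis by (rule has_split_factorizationI) (simp add: P)
  next
    case (Some b)
    have "split_factorization j (degen i \<circ> f) (P1 @ P2) E \<sigma>"
      using fac unfolding P(1) Some
      by (rule split_factorization_same_dims)
        (intro ball_cv_free_dims_append, auto simp: P(2) degen_append)
    then show ?thesis by (rule has_split_factorizationI) (simp add: P)
  qed
qed

text \<open>A connection with one fixed input \<open>c\<close> is constant if \<open>c\<close> is absorbing for it
  and the identity on the other input otherwise.\<close>

lemma has_split_factorization_conn_fixed:
  assumes fac: "split_factorization j f (P1 @ Q @ P2) E \<sigma>" and i: "length P1 = i"
    and Q: "Q = [None, Some c] \<or> Q = [Some c, None]"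
  shows "has_split_factorization j (Suc (length P1 + length P2)) (conn i e \<circ> f)"
proof (cases "c = e")
  case True
  have "split_factorization j (conn i e \<circ> f) (P1 @ Some e # P2)
      (degen (free_dims P1) \<circ> E) (\<sigma> \<circ> face (free_dims P1) False)"
    by (rule split_factorization_degen[OF fac], intro ball_cv_free_dims_append)
      (use Q in \<open>auto simp: i True length_Suc_conv conn_append degen_append\<close>)
  then show ?thesis by (rule has_split_factorizationI) simp
next
  case False
  then have c: "c = (\<not> e)" by blast
  have "split_factorization j (conn i e \<circ> f) (P1 @ None # P2) E \<sigma>"
    by (rule split_factorization_same_dims[OF fac], intro ball_cv_free_dims_append)
      (use Q in \<open>auto simp: i c length_Suc_conv conn_append\<close>)
  then show ?thesis by (rule has_split_factorizationI) simp
qed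

lemma has_split_factorization_conn:
  assumes fac: "split_factorization j f P E \<sigma>" and i: "Suc i < length P"
  shows "has_split_factorization j (length P - 1) (conn i e \<circ> f)"
proof -
  obtain P1 x y P2 where P: "P = P1 @ x # y # P2" "length P1 = i"
  proof -
    obtain P1 x rest where "P = P1 @ x # rest" "length P1 = i"
      using split_list_Cons i by (meson Suc_lessD)
    moreover have "rest \<noteq> []" using calculation i by auto
    ultimately show ?thesis using that by (auto simp: neq_Nil_conv)
  qed
  have ih: "split_factorization j f (P1 @ [x, y] @ P2) E \<sigma>" using fac P by simp
  have "has_split_factorization j (Suc (length P1 + length P2)) (conn i e \<circ> f)"
  proof (cases x; cases y)
    assume xy: "x = None" "y = None"
    let ?k = "free_dims P1"
    have "split_factorization j (conn i e \<circ> f) (P1 @ None # P2)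
        (conn ?k e \<circ> E) (\<sigma> \<circ> face (Suc ?k) (\<not> e))"
      by (rule split_factorization_conn[where q = "?k + free_dims P2", OF ih[unfolded xy]])
        (intro ball_cv_free_dims_append, auto simp: P(2) length_Suc_conv conn_append)
    then show ?thesis by (rule has_split_factorizationI) simp
  next
    fix a b assume xy: "x = Some a" "y = Some b"
    have "split_factorization j (conn i e \<circ> f) (P1 @ Some (if e then a \<or> b else a \<and> b) # P2) E \<sigma>"
      by (rule split_factorization_same_dims[OF ih[unfolded xy]])
        (intro ball_cv_free_dims_append, auto simp: P(2) conn_append)
    then show ?thesis by (rule has_split_factorizationI) simp
  next
    fix c assume "x = None" "y = Some c"
    then show ?thesis
      using has_split_factorization_conn_fixed[of j f P1 "[None, Some c]"] ih P(2) by simp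
  next
    fix c assume "x = Some c" "y = None"
    then show ?thesis
      using has_split_factorization_conn_fixed[of j f P1 "[Some c, None]"] ih P(2) by simp
  qed
  then show ?thesis using P by simp
qed

lemma box_mor0_has_split_factorization: "box_mor0 j m f \<Longrightarrow> has_split_factorization j m f"
proof (induction rule: box_mor0.induct)
  case (idm k)
  have "split_factorization k (\<lambda>x. x) (replicate k None) (\<lambda>x. x) (\<lambda>x. x)"
    by (auto simp: split_factorization_def cv_cube fill_replicate_None
        intro: box_mor0.idm graph_map_id)
  then show ?case by (rule has_split_factorizationI) simp
next
  case (facem k m f i e)
  then obtain P E \<sigma> where "length P = m" "split_factorization k f P E \<sigma>"
    by (auto simp: has_split_factorization_def)
  then show ?case using has_split_factorization_face[of k f P E \<sigma> i e] facem.hyps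
    by (simp add: comp_def)
next
  case (degenm k m f i)
  then obtain P E \<sigma> where "length P = Suc m" "split_factorization k f P E \<sigma>"
    by (auto simp: has_split_factorization_def)
  then show ?case using has_split_factorization_degen[of k f P E \<sigma> i] degenm.hyps
    by (simp add: comp_def)
next
  case (connm k m f i e)
  then obtain P E \<sigma> where "length P = Suc (Suc m)" "split_factorization k f P E \<sigma>"
    by (auto simp: has_split_factorization_def)
  then show ?case using has_split_factorization_conn[of k f P E \<sigma> i e] connm.hyps
    by (simp add: comp_def)
qed

lemma cells_sk: "cells (sk n X) k = \<Inter> {S k | S. sub_cset X S \<and> (\<forall>m\<le>n. cells X m \<subseteq> S m)}"
  by (simp add: cells_def sk_def)

lemma act_sk [simp]: "act (sk n X) = act X"
  by (simp add: act_def sk_def)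

lemma boxhomI: "box_mor0 k m f \<Longrightarrow> restrict f (cv k) \<in> boxhom k m"
  by (auto simp: boxhom_def)

lemma boxhomE:
  assumes "f \<in> boxhom k m"
  obtains f0 where "box_mor0 k m f0" "f = restrict f0 (cv k)"
  using assms by (auto simp: boxhom_def)

lemma boxhom_in_cv: "f \<in> boxhom k m \<Longrightarrow> t \<in> cv k \<Longrightarrow> f t \<in> cv m"
  by (erule boxhomE) (simp add: box_mor0_in_cv)

lemma boxhom_id: "restrict (\<lambda>y. y) (cv k) \<in> boxhom k k"
  by (rule boxhomI[OF box_mor0.idm])

lemma boxhom_comp: "f \<in> boxhom k m \<Longrightarrow> g \<in> boxhom m p \<Longrightarrow> restrict (g \<circ> f) (cv k) \<in> boxhom k p"
proof -
  assume "f \<in> boxhom k m" "g \<in> boxhom m p"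
  then obtain f0 g0 where f0: "box_mor0 k m f0" "f = restrict f0 (cv k)"
    and g0: "box_mor0 m p g0" "g = restrict g0 (cv m)"
    by (auto elim!: boxhomE)
  then have "restrict (g \<circ> f) (cv k) = restrict (g0 \<circ> f0) (cv k)"
    by (auto simp: box_mor0_in_cv)
  then show ?thesis using boxhomI[OF box_mor0_comp[OF g0(1) f0(1)]] by simp
qed

lemma sk_least: "sub_cset X S \<Longrightarrow> \<forall>m\<le>n. cells X m \<subseteq> S m \<Longrightarrow> cells (sk n X) k \<subseteq> S k"
  unfolding cells_sk by blast

lemma cells_sk_low: "m \<le> n \<Longrightarrow> cells X m \<subseteq> cells (sk n X) m"
  unfolding cells_sk by blast

lemma act_sk_closed:
  assumes f: "f \<in> boxhom k m" and x: "x \<in> cells (sk n X) m"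
  shows "act X k m f x \<in> cells (sk n X) k"
  unfolding cells_sk
proof (rule InterI)
  fix T assume "T \<in> {S k | S. sub_cset X S \<and> (\<forall>m\<le>n. cells X m \<subseteq> S m)}"
  then obtain S where S: "T = S k" "sub_cset X S" "\<forall>m\<le>n. cells X m \<subseteq> S m" by blast
  then have "x \<in> S m" using sk_least x by blast
  then show "act X k m f x \<in> T" using S f unfolding sub_cset_def by blast
qed

lemma cubical_set_act_closed:
  "cubical_set X \<Longrightarrow> f \<in> boxhom k m \<Longrightarrow> x \<in> cells X m \<Longrightarrow> act X k m f x \<in> cells X k"
  unfolding cubical_set_def by blast

lemma cubical_set_act_id:
  "cubical_set X \<Longrightarrow> x \<in> cells X k \<Longrightarrow> act X k k (restrict (\<lambda>y. y) (cv k)) x = x"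
  unfolding cubical_set_def by blast

lemma cubical_set_act_comp:
  "cubical_set X \<Longrightarrow> f \<in> boxhom k m \<Longrightarrow> g \<in> boxhom m p \<Longrightarrow> x \<in> cells X p \<Longrightarrow>
    act X k p (restrict (g \<circ> f) (cv k)) x = act X k m f (act X m p g x)"
  unfolding cubical_set_def by blast

lemma cells_sk_subset: "cubical_set X \<Longrightarrow> cells (sk n X) k \<subseteq> cells X k"
  by (rule sk_least) (auto simp: sub_cset_def intro: cubical_set_act_closed)

lemma cubical_set_sk:
  assumes X: "cubical_set X"
  shows "cubical_set (sk n X)"
  unfolding cubical_set_def act_sk
proof (intro conjI allI ballI impI)
  fix k m f x assume "f \<in> boxhom k m" "x \<in> cells (sk n X) m"
  then show "act X k m f x \<in> cells (sk n X) k" by (rule act_sk_closed)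
next
  fix k x assume "x \<in> cells (sk n X) k"
  then show "act X k k (restrict (\<lambda>y. y) (cv k)) x = x"
    using cubical_set_act_id[OF X] cells_sk_subset[OF X] by blast
next
  fix k m p f g x assume "f \<in> boxhom k m" "g \<in> boxhom m p" "x \<in> cells (sk n X) p"
  then show "act X k p (restrict (g \<circ> f) (cv k)) x = act X k m f (act X m p g x)"
    using cubical_set_act_comp[OF X] cells_sk_subset[OF X] by blast
qed

lemma cells_skE:
  assumes X: "cubical_set X" and x: "x \<in> cells (sk n X) k"
  obtains m f y where "m \<le> n" "f \<in> boxhom k m" "y \<in> cells X m" "x = act X k m f y"
proof -
  define S where "S k = {act X k m f y | m f y. m \<le> n \<and> f \<in> boxhom k m \<and> y \<in> cells X m}" for k
  have "sub_cset X S"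
    unfolding sub_cset_def
  proof (intro conjI allI impI subsetI)
    fix k x assume "x \<in> S k"
    then show "x \<in> cells X k" unfolding S_def using cubical_set_act_closed[OF X] by blast
  next
    fix k m g x assume g: "g \<in> boxhom k m" and "x \<in> S m"
    then obtain p f y where "p \<le> n" "f \<in> boxhom m p" "y \<in> cells X p" "x = act X m p f y"
      unfolding S_def by blast
    moreover from this have "act X k m g x = act X k p (restrict (f \<circ> g) (cv k)) y"
      using cubical_set_act_comp[OF X g] by simp
    ultimately show "act X k m g x \<in> S k"
      unfolding S_def using boxhom_comp g by blast
  qed
  moreover have "cells X m \<subseteq> S m" if "m \<le> n" for m
  proof
    fix y assume y: "y \<in> cells X m"
    then have "y = act X m m (restrict (\<lambda>y. y) (cv m)) y" using cubical_set_act_id[OF X] by simp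
    then show "y \<in> S m" unfolding S_def using that boxhom_id y by blast
  qed
  ultimately have "x \<in> S k" using sk_least x by blast
  then show ?thesis using that unfolding S_def by blast
qed

lemma cset_mor_cells: "cset_mor X Y \<phi> \<Longrightarrow> x \<in> cells X k \<Longrightarrow> \<phi> k x \<in> cells Y k"
  unfolding cset_mor_def by blast

lemma cset_mor_act:
  "cset_mor X Y \<phi> \<Longrightarrow> f \<in> boxhom k m \<Longrightarrow> x \<in> cells X m \<Longrightarrow> \<phi> k (act X k m f x) = act Y k m f (\<phi> m x)"
  by (simp add: cset_mor_def)

lemma cset_mor_sk:
  assumes X: "cubical_set X" and \<phi>: "cset_mor X Y \<phi>"
  shows "cset_mor (sk n X) (sk n Y) \<phi>"
  unfolding cset_mor_def act_sk
proof (intro conjI allI ballI impI)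
  fix k x assume "x \<in> cells (sk n X) k"
  then obtain m f y where m: "m \<le> n" and f: "f \<in> boxhom k m" and y: "y \<in> cells X m"
    and x: "x = act X k m f y"
    by (rule cells_skE[OF X])
  have "\<phi> m y \<in> cells (sk n Y) m" by (rule subsetD[OF cells_sk_low[OF m] cset_mor_cells[OF \<phi> y]])
  then show "\<phi> k x \<in> cells (sk n Y) k"
    unfolding x cset_mor_act[OF \<phi> f y] by (rule act_sk_closed[OF f])
next
  fix k m f x assume f: "f \<in> boxhom k m" and x: "x \<in> cells (sk n X) m"
  show "\<phi> k (act X k m f x) = act Y k m f (\<phi> m x)"
    by (rule cset_mor_act[OF \<phi> f]) (use x cells_sk_subset[OF X] in blast)
qed

lemma cells_nerve1: "cells (nerve1 G) k = {c. c \<in> extensional (cv k) \<and> graph_map (cube k) G c}"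
  by (simp add: cells_def nerve1_def)

lemma act_nerve1: "act (nerve1 G) k m f c = restrict (c \<circ> f) (cv k)"
  by (simp add: act_def nerve1_def)

lemma act_nerve1_restrict: "act (nerve1 G) k m (restrict f (cv k)) c = restrict (c \<circ> f) (cv k)"
  unfolding act_nerve1 by (rule restrict_ext) simp

lemma cubical_set_nerve1: "cubical_set (nerve1 G)"
  unfolding cubical_set_def
proof (intro conjI allI ballI impI)
  fix k m f c assume "f \<in> boxhom k m" "c \<in> cells (nerve1 G) m"
  then obtain f0 where "box_mor0 k m f0" "f = restrict f0 (cv k)" "c \<in> cells (nerve1 G) m"
    by (auto elim: boxhomE)
  then show "act (nerve1 G) k m f c \<in> cells (nerve1 G) k"
    using box_mor0_graph_map[of k m f0] by (auto simp: cells_nerve1 act_nerve1 graph_map_def)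
next
  fix k c assume "c \<in> cells (nerve1 G) k"
  then show "act (nerve1 G) k k (restrict (\<lambda>y. y) (cv k)) c = c"
    by (auto simp: cells_nerve1 act_nerve1 intro!: extensionalityI[of _ "cv k"])
next
  fix k m p f g c assume f: "f \<in> boxhom k m"
  show "act (nerve1 G) k p (restrict (g \<circ> f) (cv k)) c =
      act (nerve1 G) k m f (act (nerve1 G) m p g c)"
    unfolding act_nerve1 by (rule restrict_ext) (simp add: boxhom_in_cv[OF f])
qed

lemma cset_mor_sk_source: "cubical_set X \<Longrightarrow> cset_mor X Y \<phi> \<Longrightarrow> cset_mor (sk n X) Y \<phi>"
  using cells_sk_subset[of X n] unfolding cset_mor_def act_sk by blast

lemma cset_mor_nerve1_map:
  assumes \<phi>: "graph_map G H \<phi>"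
  shows "cset_mor (nerve1 G) (nerve1 H) (nerve1_map \<phi>)"
  unfolding cset_mor_def
proof (intro conjI allI ballI impI)
  fix k c assume "c \<in> cells (nerve1 G) k"
  then show "nerve1_map \<phi> k c \<in> cells (nerve1 H) k"
    using \<phi> by (auto simp: cells_nerve1 graph_map_def nerve1_map_def)
next
  fix k m f c assume f: "f \<in> boxhom k m"
  show "nerve1_map \<phi> k (act (nerve1 G) k m f c) = act (nerve1 H) k m f (nerve1_map \<phi> m c)"
    unfolding act_nerve1 nerve1_map_def by (rule restrict_ext) (simp add: boxhom_in_cv[OF f])
qed

lemma nerve1_map_comp: "nerve1_map \<psi> j (nerve1_map \<phi> j c) = nerve1_map (\<psi> \<circ> \<phi>) j c"
  unfolding nerve1_map_def by (rule restrict_ext) simp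

lemma nerve1_map_cong:
  "\<forall>x\<in>gverts G. \<phi> x = \<psi> x \<Longrightarrow> c \<in> cells (nerve1 G) j \<Longrightarrow> nerve1_map \<phi> j c = nerve1_map \<psi> j c"
  unfolding nerve1_map_def by (rule restrict_ext) (auto simp: cells_nerve1 graph_map_def)

lemma inj_on_nerve1_map:
  assumes inj: "inj_on \<phi> (gverts G)"
  shows "inj_on (nerve1_map \<phi> j) (cells (nerve1 G) j)"
proof (rule inj_onI)
  fix c c' assume c: "c \<in> cells (nerve1 G) j" and c': "c' \<in> cells (nerve1 G) j"
    and eq: "nerve1_map \<phi> j c = nerve1_map \<phi> j c'"
  show "c = c'"
  proof (rule extensionalityI[of _ "cv j"])
    fix t assume t: "t \<in> cv j"
    then have "\<phi> (c t) = \<phi> (c' t)" using fun_cong[OF eq, of t] by (simp add: nerve1_map_def)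
    moreover have "c t \<in> gverts G" "c' t \<in> gverts G" using c c' t
      by (auto simp: cells_nerve1 graph_map_def)
    ultimately show "c t = c' t" using inj by (auto dest: inj_onD)
  qed (use c c' in \<open>auto simp: cells_nerve1\<close>)
qed

lemma cubical_set_sk_nerve1: "cubical_set (sk n (nerve1 G))"
  by (rule cubical_set_sk[OF cubical_set_nerve1])

lemma cells_sk_nerve1_subset: "cells (sk n (nerve1 G)) j \<subseteq> cells (nerve1 G) j"
  by (rule cells_sk_subset[OF cubical_set_nerve1])

lemma cset_mor_sk_nerve1_map:
  "graph_map G H \<phi> \<Longrightarrow> cset_mor (sk n (nerve1 G)) (sk n (nerve1 H)) (nerve1_map \<phi>)"
  by (rule cset_mor_sk[OF cubical_set_nerve1 cset_mor_nerve1_map])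

lemma inj_on_sk_nerve1_map:
  "inj_on \<phi> (gverts G) \<Longrightarrow> inj_on (nerve1_map \<phi> j) (cells (sk n (nerve1 G)) j)"
  by (rule inj_on_subset[OF inj_on_nerve1_map cells_sk_nerve1_subset])

lemma nerve1_map_square_commutes:
  assumes "\<forall>x\<in>gverts G. hl (gh x) = kl (gk x)" and "a \<in> cells (nerve1 G) j"
  shows "nerve1_map hl j (nerve1_map gh j a) = nerve1_map kl j (nerve1_map gk j a)"
proof -
  have "\<forall>x\<in>gverts G. (hl \<circ> gh) x = (kl \<circ> gk) x" using assms(1) by simp
  then show ?thesis unfolding nerve1_map_comp using assms(2) by (rule nerve1_map_cong)
qed

section \<open>Monomorphisms reflect skeleta\<close>

lemma cells_sk_nerve1_reflect:
  assumes inj: "inj_on \<phi> (gverts G)" and a: "a \<in> cells (nerve1 G) j"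
    and sk: "nerve1_map \<phi> j a \<in> cells (sk n (nerve1 H)) j"
  shows "a \<in> cells (sk n (nerve1 G)) j"
proof -
  obtain m f x where m: "m \<le> n" and f: "f \<in> boxhom j m" and x: "x \<in> cells (nerve1 H) m"
    and \<phi>a: "nerve1_map \<phi> j a = act (nerve1 H) j m f x"
    by (rule cells_skE[OF cubical_set_nerve1 sk])
  obtain f0 where f0: "box_mor0 j m f0" "f = restrict f0 (cv j)" using f by (rule boxhomE)
  obtain P E \<sigma> where "length P = m" and fac: "split_factorization j f0 P E \<sigma>"
    using box_mor0_has_split_factorization[OF f0(1)] by (auto simp: has_split_factorization_def)
  define p where "p = free_dims P"
  have p: "p \<le> n" using free_dims_le_length[of P] \<open>length P = m\<close> m by (simp add: p_def)
  have E: "box_mor0 j p E" and \<sigma>: "graph_map (cube p) (cube j) \<sigma>"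
    and E\<sigma>: "\<forall>z\<in>cv p. E (\<sigma> z) = z" and f0E: "\<forall>t\<in>cv j. f0 t = fill P (E t)"
    using fac by (auto simp: split_factorization_def p_def)
  have ag: "graph_map (cube j) G a" using a by (simp add: cells_nerve1)
  have \<phi>a_at: "\<phi> (a t) = x (f0 t)" if "t \<in> cv j" for t
    using fun_cong[OF \<phi>a, of t] that f0(2) by (simp add: nerve1_map_def act_nerve1)
  text \<open>\<open>f0\<close> and hence \<open>\<phi> \<circ> a\<close> are constant on the fibres of \<open>E\<close>, so the injective \<open>\<phi>\<close> forces
    \<open>a\<close> to factor through \<open>E\<close>, with factor \<open>a \<circ> \<sigma>\<close>.\<close>
  have "act (nerve1 G) j p (restrict E (cv j)) (restrict (a \<circ> \<sigma>) (cv p)) = a"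
  proof (rule extensionalityI[of _ "cv j"])
    fix t assume t: "t \<in> cv j"
    have Et: "E t \<in> cv p" by (rule box_mor0_in_cv[OF E t])
    have st: "\<sigma> (E t) \<in> cv j" using \<sigma> Et unfolding graph_map_def by blast
    have "\<phi> (a (\<sigma> (E t))) = \<phi> (a t)"
      using \<phi>a_at[OF st] \<phi>a_at[OF t] f0E st t E\<sigma> Et by simp
    moreover have "a (\<sigma> (E t)) \<in> gverts G" "a t \<in> gverts G"
      using ag st t unfolding graph_map_def by blast+
    ultimately show "act (nerve1 G) j p (restrict E (cv j)) (restrict (a \<circ> \<sigma>) (cv p)) t = a t"
      using inj t Et by (simp add: act_nerve1 inj_on_eq_iff)
  qed (use a in \<open>auto simp: act_nerve1 cells_nerve1\<close>)
  moreover have "restrict (a \<circ> \<sigma>) (cv p) \<in> cells (nerve1 G) p"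
    using graph_map_restrict[OF graph_map_comp[OF \<sigma> ag]] by (simp add: cells_nerve1)
  then have "restrict (a \<circ> \<sigma>) (cv p) \<in> cells (sk n (nerve1 G)) p"
    using cells_sk_low[OF p] by (rule subsetD[rotated])
  ultimately show ?thesis using act_sk_closed[OF boxhomI[OF E]] by metis
qed

section \<open>Pullbacks and covers\<close>

lemma graph_is_pullback_lift:
  assumes pb: "graph_is_pullback G H K L gh gk hl kl"
    and \<beta>: "graph_map X H \<beta>" and \<gamma>: "graph_map X K \<gamma>" and eq: "\<forall>x\<in>gverts X. hl (\<beta> x) = kl (\<gamma> x)"
  obtains \<alpha> where "graph_map X G \<alpha>" "\<forall>x\<in>gverts X. gh (\<alpha> x) = \<beta> x \<and> gk (\<alpha> x) = \<gamma> x"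
proof -
  define P where "P = graph_pullback_obj H K hl kl"
  define q where "q = (\<lambda>x. (gh x, gk x))"
  have bij: "bij_betw q (gverts G) (gverts P)"
    and edges: "\<forall>x\<in>gverts G. \<forall>y\<in>gverts G. gedge G x y \<longleftrightarrow> gedge P (q x) (q y)"
    using pb unfolding graph_is_pullback_def P_def q_def Let_def by blast+
  have inP: "(\<beta> x, \<gamma> x) \<in> gverts P" if "x \<in> gverts X" for x
    using \<beta> \<gamma> eq that by (auto simp: P_def graph_pullback_obj_def gverts_def graph_map_def)
  define \<alpha> where "\<alpha> x = inv_into (gverts G) q (\<beta> x, \<gamma> x)" for x
  have \<alpha>G: "\<alpha> x \<in> gverts G" and q\<alpha>: "q (\<alpha> x) = (\<beta> x, \<gamma> x)" if "x \<in> gverts X" for x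
    using bij inP[OF that] unfolding \<alpha>_def by (auto simp: bij_betw_def inv_into_into f_inv_into_f)
  have "graph_map X G \<alpha>"
    unfolding graph_map_def
  proof (intro conjI ballI impI)
    fix x y assume x: "x \<in> gverts X" and y: "y \<in> gverts X" and xy: "gedge X x y"
    have "gedge H (\<beta> x) (\<beta> y)" "gedge K (\<gamma> x) (\<gamma> y)"
      using \<beta> \<gamma> x y xy unfolding graph_map_def by blast+
    then have "gedge P (q (\<alpha> x)) (q (\<alpha> y))"
      using inP[OF x] inP[OF y] q\<alpha>[OF x] q\<alpha>[OF y]
      by (simp add: P_def graph_pullback_obj_def gedge_def gverts_def)
    then show "gedge G (\<alpha> x) (\<alpha> y)" using edges \<alpha>G x y by blast
  qed (rule \<alpha>G)
  moreover have "\<forall>x\<in>gverts X. gh (\<alpha> x) = \<beta> x \<and> gk (\<alpha> x) = \<gamma> x"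
    using q\<alpha> by (simp add: q_def)
  ultimately show ?thesis by (rule that)
qed

lemma nerve1_pullback_lift:
  assumes pb: "graph_is_pullback G H K L gh gk hl kl"
    and b: "b \<in> cells (nerve1 H) j" and c: "c \<in> cells (nerve1 K) j"
    and eq: "nerve1_map hl j b = nerve1_map kl j c"
  obtains a where "a \<in> cells (nerve1 G) j" "nerve1_map gh j a = b" "nerve1_map gk j a = c"
proof -
  have "\<forall>t\<in>cv j. hl (b t) = kl (c t)"
  proof
    fix t assume "t \<in> cv j"
    then show "hl (b t) = kl (c t)" using fun_cong[OF eq, of t] by (simp add: nerve1_map_def)
  qed
  moreover have "graph_map (cube j) H b" "graph_map (cube j) K c" using b c
    by (simp_all add: cells_nerve1)
  ultimately obtain \<alpha> where \<alpha>: "graph_map (cube j) G \<alpha>" "\<forall>t\<in>cv j. gh (\<alpha> t) = b t \<and> gk (\<alpha> t) = c t"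
    using graph_is_pullback_lift[OF pb] by blast
  show ?thesis
  proof
    show "restrict \<alpha> (cv j) \<in> cells (nerve1 G) j"
      using graph_map_restrict[OF \<alpha>(1)] by (simp add: cells_nerve1)
    show "nerve1_map gh j (restrict \<alpha> (cv j)) = b" "nerve1_map gk j (restrict \<alpha> (cv j)) = c"
      using \<alpha>(2) b c
      by (auto simp: nerve1_map_def cells_nerve1 intro!: extensionalityI[of _ "cv j"])
  qed
qed

lemma sub_cset_image_Un:
  assumes B: "cubical_set B" and C: "cubical_set C" and h: "cset_mor B D h" and k: "cset_mor C D k"
  shows "sub_cset D (\<lambda>j. h j ` cells B j \<union> k j ` cells C j)"
  unfolding sub_cset_def
proof (intro conjI allI impI subsetI)
  fix j d assume "d \<in> h j ` cells B j \<union> k j ` cells C j"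
  then show "d \<in> cells D j" using cset_mor_cells[OF h] cset_mor_cells[OF k] by blast
next
  fix j m f d assume f: "f \<in> boxhom j m" and "d \<in> h m ` cells B m \<union> k m ` cells C m"
  then consider b where "b \<in> cells B m" "d = h m b" | c where "c \<in> cells C m" "d = k m c" by blast
  then show "act D j m f d \<in> h j ` cells B j \<union> k j ` cells C j"
  proof cases
    case (1 b)
    then have "act D j m f d = h j (act B j m f b)" using cset_mor_act[OF h f] by simp
    then show ?thesis using cubical_set_act_closed[OF B f 1(1)] by blast
  next
    case (2 c)
    then have "act D j m f d = k j (act C j m f c)" using cset_mor_act[OF k f] by simp
    then show ?thesis using cubical_set_act_closed[OF C f 2(1)] by blast
  qed
qed

text \<open>An \<open>m\<close>-cube \<open>x\<close> with \<open>m \<le> n\<close> is recovered from its pullback along the projection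
  \<open>drop (n - m)\<close> by precomposing with the section that prepends zeros.\<close>

lemma nerve1_low_cube_lift:
  assumes x: "x \<in> cells (nerve1 L) m" and m: "m \<le> n" and d: "graph_map (cube n) M d"
    and eq: "\<forall>z\<in>cv n. x (drop (n - m) z) = \<phi> (d z)"
  shows "x \<in> nerve1_map \<phi> m ` cells (sk n (nerve1 M)) m"
proof -
  define s where "s z = replicate (n - m) False @ z" for z :: "bool list"
  have s: "box_mor0 m n s" using box_mor0_prepend_False[of m "n - m"] m unfolding s_def by simp
  have "restrict d (cv n) \<in> cells (sk n (nerve1 M)) n"
    using graph_map_restrict[OF d] cells_sk_low[of n n "nerve1 M"] by (auto simp: cells_nerve1)
  then have b:
      "act (nerve1 M) m n (restrict s (cv m)) (restrict d (cv n)) \<in> cells (sk n (nerve1 M)) m"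
    by (rule act_sk_closed[OF boxhomI[OF s]])
  have "x = nerve1_map \<phi> m (act (nerve1 M) m n (restrict s (cv m)) (restrict d (cv n)))"
  proof (rule extensionalityI[of _ "cv m"])
    fix z assume z: "z \<in> cv m"
    have "s z \<in> cv n" by (rule box_mor0_in_cv[OF s z])
    moreover have "drop (n - m) (s z) = z" by (simp add: s_def)
    ultimately show
        "x z = nerve1_map \<phi> m (act (nerve1 M) m n (restrict s (cv m)) (restrict d (cv n))) z"
      using eq z by (metis nerve1_map_def act_nerve1 comp_apply restrict_apply')
  qed (use x in \<open>auto simp: cells_nerve1 nerve1_map_def\<close>)
  then show ?thesis by (rule image_eqI[OF _ b])
qed

lemma cells_sk_nerve1_cover:
  fixes H :: "'h graph" and K :: "'k graph" and L :: "'l graph"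
  assumes hl: "graph_map H L hl" and kl: "graph_map K L kl"
    and cover: "\<forall>c. graph_map (cube n) L c \<longrightarrow>
                  (\<exists>d. graph_map (cube n) H d \<and> (\<forall>x\<in>cv n. c x = hl (d x))) \<or>
                  (\<exists>d. graph_map (cube n) K d \<and> (\<forall>x\<in>cv n. c x = kl (d x)))"
  shows "cells (sk n (nerve1 L)) j \<subseteq>
    nerve1_map hl j ` cells (sk n (nerve1 H)) j \<union> nerve1_map kl j ` cells (sk n (nerve1 K)) j"
proof (rule sk_least)
  show "sub_cset (nerve1 L)
      (\<lambda>j. nerve1_map hl j ` cells (sk n (nerve1 H)) j
        \<union> nerve1_map kl j ` cells (sk n (nerve1 K)) j)"
    by (intro sub_cset_image_Un cubical_set_sk cubical_set_nerve1 cset_mor_sk_source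
        cset_mor_nerve1_map hl kl)
  show "\<forall>m\<le>n. cells (nerve1 L) m \<subseteq>
      nerve1_map hl m ` cells (sk n (nerve1 H)) m \<union> nerve1_map kl m ` cells (sk n (nerve1 K)) m"
  proof (intro allI impI subsetI)
    fix m x assume m: "m \<le> n" and x: "x \<in> cells (nerve1 L) m"
    have "act (nerve1 L) n m (restrict (drop (n - m)) (cv n)) x \<in> cells (nerve1 L) n"
      using box_mor0_drop[of "n - m" n] m
      by (intro cubical_set_act_closed[OF cubical_set_nerve1 boxhomI x]) simp
    then have "graph_map (cube n) L (restrict (x \<circ> drop (n - m)) (cv n))"
      by (simp add: cells_nerve1 act_nerve1_restrict)
    from cover[rule_format, OF this] consider
        (H) d where "graph_map (cube n) H d" "\<forall>z\<in>cv n. x (drop (n - m) z) = hl (d z)"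
      | (K) d where "graph_map (cube n) K d" "\<forall>z\<in>cv n. x (drop (n - m) z) = kl (d z)"
      by auto
    then show "x \<in> nerve1_map hl m ` cells (sk n (nerve1 H)) m
      \<union> nerve1_map kl m ` cells (sk n (nerve1 K)) m"
    proof cases
      case H
      then show ?thesis by (rule UnI1[OF nerve1_low_cube_lift[OF x m]])
    next
      case K
      then show ?thesis by (rule UnI2[OF nerve1_low_cube_lift[OF x m]])
    qed
  qed
qed

lemma sk_nerve1_pullback_lift:
  assumes pb: "graph_is_pullback G H K L gh gk hl kl" and inj: "inj_on gh (gverts G)"
    and b: "b \<in> cells (sk n (nerve1 H)) j" and c: "c \<in> cells (sk n (nerve1 K)) j"
    and eq: "nerve1_map hl j b = nerve1_map kl j c"
  shows "\<exists>a\<in>cells (sk n (nerve1 G)) j. nerve1_map gh j a = b \<and> nerve1_map gk j a = c"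
proof -
  obtain a where a: "a \<in> cells (nerve1 G) j" "nerve1_map gh j a = b" "nerve1_map gk j a = c"
    by (rule nerve1_pullback_lift[OF pb subsetD[OF cells_sk_nerve1_subset b]
          subsetD[OF cells_sk_nerve1_subset c] eq])
  moreover have "a \<in> cells (sk n (nerve1 G)) j"
    using cells_sk_nerve1_reflect[OF inj a(1)] a(2) b by simp
  ultimately show ?thesis by blast
qed

section \<open>A pushout criterion for cubical sets\<close>

lemma cset_mor_from_cover:
  assumes B: "cubical_set B" and C: "cubical_set C"
    and h: "cset_mor B D h" and k: "cset_mor C D k" and u: "cset_mor B X u" and v: "cset_mor C X v"
    and cover: "\<And>j. cells D j \<subseteq> h j ` cells B j \<union> k j ` cells C j"
    and wh: "\<And>j b. b \<in> cells B j \<Longrightarrow> w j (h j b) = u j b"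
    and wk: "\<And>j c. c \<in> cells C j \<Longrightarrow> w j (k j c) = v j c"
  shows "cset_mor D X w"
  unfolding cset_mor_def
proof (intro conjI allI ballI impI)
  fix j d assume "d \<in> cells D j"
  then consider b where "b \<in> cells B j" "d = h j b" | c where "c \<in> cells C j" "d = k j c"
    using cover by blast
  then show "w j d \<in> cells X j"
    by cases (simp_all add: wh wk cset_mor_cells[OF u] cset_mor_cells[OF v])
next
  fix j m f d assume f: "f \<in> boxhom j m" and "d \<in> cells D m"
  then consider b where "b \<in> cells B m" "d = h m b" | c where "c \<in> cells C m" "d = k m c"
    using cover by blast
  then show "w j (act D j m f d) = act X j m f (w m d)"
  proof cases
    case (1 b)
    then have "act D j m f d = h j (act B j m f b)" using cset_mor_act[OF h f] by simp
    then have "w j (act D j m f d) = u j (act B j m f b)"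
      using wh cubical_set_act_closed[OF B f 1(1)] by simp
    then show ?thesis using 1 cset_mor_act[OF u f] wh by simp
  next
    case (2 c)
    then have "act D j m f d = k j (act C j m f c)" using cset_mor_act[OF k f] by simp
    then have "w j (act D j m f d) = v j (act C j m f c)"
      using wk cubical_set_act_closed[OF C f 2(1)] by simp
    then show ?thesis using 2 cset_mor_act[OF v f] wk by simp
  qed
qed

lemma cset_pushout_of_covering_pullback:
  assumes B: "cubical_set B" and C: "cubical_set C"
    and f: "cset_mor A B f" and g: "cset_mor A C g" and h: "cset_mor B D h" and k: "cset_mor C D k"
    and comm: "\<forall>j. \<forall>a\<in>cells A j. h j (f j a) = k j (g j a)"
    and inj_h: "\<And>j. inj_on (h j) (cells B j)" and inj_k: "\<And>j. inj_on (k j) (cells C j)"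
    and pullback: "\<And>j b c. b \<in> cells B j \<Longrightarrow> c \<in> cells C j \<Longrightarrow> h j b = k j c \<Longrightarrow>
        \<exists>a\<in>cells A j. f j a = b \<and> g j a = c"
    and cover: "\<And>j. cells D j \<subseteq> h j ` cells B j \<union> k j ` cells C j"
  shows "cset_pushout A B C D f g h k TYPE('x)"
  unfolding cset_pushout_def
proof (intro conjI allI impI f g h k)
  fix X :: "'x cset" and u v
  assume u: "cset_mor B X u" and v: "cset_mor C X v"
    and agree: "\<forall>j. \<forall>a\<in>cells A j. u j (f j a) = v j (g j a)"
  define w where "w j d = (if d \<in> h j ` cells B j then u j (the_inv_into (cells B j) (h j) d)
    else v j (the_inv_into (cells C j) (k j) d))" for j d
  have wh: "w j (h j b) = u j b" if "b \<in> cells B j" for j b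
    using that inj_h by (simp add: w_def the_inv_into_f_f)
  have wk: "w j (k j c) = v j c" if c: "c \<in> cells C j" for j c
  proof (cases "k j c \<in> h j ` cells B j")
    case True
    then obtain b where b: "b \<in> cells B j" "k j c = h j b" by blast
    then obtain a where "a \<in> cells A j" "f j a = b" "g j a = c" using pullback c by metis
    then have "u j b = v j c" using agree by blast
    then show ?thesis using b wh by metis
  next
    case False
    then show ?thesis using c inj_k by (simp add: w_def the_inv_into_f_f)
  qed
  have unique: "w' j d = w j d"
    if "\<forall>j. \<forall>b\<in>cells B j. w' j (h j b) = u j b" "\<forall>j. \<forall>c\<in>cells C j. w' j (k j c) = v j c"
      and "d \<in> cells D j" for w' j d
    using that cover[of j] wh wk by auto
  show "\<exists>w. cset_mor D X w \<and> (\<forall>j. \<forall>b\<in>cells B j. w j (h j b) = u j b) \<and>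
      (\<forall>j. \<forall>c\<in>cells C j. w j (k j c) = v j c) \<and>
      (\<forall>w'. cset_mor D X w' \<longrightarrow> (\<forall>j. \<forall>b\<in>cells B j. w' j (h j b) = u j b) \<longrightarrow>
        (\<forall>j. \<forall>c\<in>cells C j. w' j (k j c) = v j c) \<longrightarrow> (\<forall>j. \<forall>d\<in>cells D j. w' j d = w j d))"
    using cset_mor_from_cover[OF B C h k u v cover wh wk] wh wk unique by blast
qed (use comm in blast)

theorem lemma2p7:
  fixes n :: nat
    and G :: "'g graph" and H :: "'h graph" and K :: "'k graph" and L :: "'l graph"
    and gh :: "'g \<Rightarrow> 'h" and gk :: "'g \<Rightarrow> 'k" and hl :: "'h \<Rightarrow> 'l" and kl :: "'k \<Rightarrow> 'l"
  assumes graphs: "is_graph G" "is_graph H" "is_graph K" "is_graph L"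
    and monic: "graph_mono G H gh" "graph_mono G K gk" "graph_mono H L hl" "graph_mono K L kl"
    and comm: "\<forall>x\<in>gverts G. hl (gh x) = kl (gk x)"
    and pb: "graph_is_pullback G H K L gh gk hl kl"
    and cover: "\<forall>c. graph_map (cube n) L c \<longrightarrow>
                  (\<exists>d. graph_map (cube n) H d \<and> (\<forall>x\<in>cv n. c x = hl (d x))) \<or>
                  (\<exists>d. graph_map (cube n) K d \<and> (\<forall>x\<in>cv n. c x = kl (d x)))"
  shows "skeletal_pushout n G H K L gh gk hl kl TYPE('x)"
proof -
  have maps: "graph_map G H gh" "graph_map G K gk" "graph_map H L hl" "graph_map K L kl"
    and inj: "inj_on gh (gverts G)" "inj_on hl (gverts H)" "inj_on kl (gverts K)"
    using monic by (simp_all add: graph_mono_def)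
  show ?thesis
    unfolding skeletal_pushout_def
  proof (rule cset_pushout_of_covering_pullback[OF cubical_set_sk_nerve1 cubical_set_sk_nerve1
        cset_mor_sk_nerve1_map cset_mor_sk_nerve1_map cset_mor_sk_nerve1_map cset_mor_sk_nerve1_map,
        OF maps])
    show "\<forall>j. \<forall>a\<in>cells (sk n (nerve1 G)) j.
        nerve1_map hl j (nerve1_map gh j a) = nerve1_map kl j (nerve1_map gk j a)"
      using nerve1_map_square_commutes[where hl = hl and gh = gh and kl = kl and gk = gk, OF comm]
        cells_sk_nerve1_subset by blast
    show "inj_on (nerve1_map hl j) (cells (sk n (nerve1 H)) j)"
      and "inj_on (nerve1_map kl j) (cells (sk n (nerve1 K)) j)" for j
      using inj by (simp_all add: inj_on_sk_nerve1_map)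
    show "\<exists>a\<in>cells (sk n (nerve1 G)) j. nerve1_map gh j a = b \<and> nerve1_map gk j a = c"
      if "b \<in> cells (sk n (nerve1 H)) j" "c \<in> cells (sk n (nerve1 K)) j"
        and "nerve1_map hl j b = nerve1_map kl j c" for j b c
      by (rule sk_nerve1_pullback_lift[OF pb inj(1) that])
    show "cells (sk n (nerve1 L)) j \<subseteq>
        nerve1_map hl j ` cells (sk n (nerve1 H)) j
          \<union> nerve1_map kl j ` cells (sk n (nerve1 K)) j" for j
      by (rule cells_sk_nerve1_cover[OF maps(3,4) cover])
  qed
qed

end
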